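(* Let $k\ge3$ and let $\mathcal X\subset\mathbb R$ be a finite set (with distance $d(x,y)=|x-y|$) having a convex-nice $k$-clustering $\mathcal C=\{C_1,\ldots,C_k\}$. Then for every integer $\ell$ with $1\le\ell\le\min_i|C_i|$ there exists an ordering of $\mathcal X$ such that the final centers of sequential $\ell$-means run on this ordering do not induce a refinement of $\mathcal C$.
   Context: A clustering of $\mathcal X$ is a set of nonempty, pairwise disjoint subsets whose union is $\mathcal X$; a $k$-clustering has exactly $k$ clusters. A clustering $\mathcal C=\{C_1,\ldots,C_k\}$ is convex-nice if for any $i\ne j$, any $x,y$ in the convex hull of $C_i$ and any $z$ in the convex hull of $C_j$, $d(y,x)<d(z,x)$. A list $T=(t_1,\ldots,t_m)$ induces the clustering of $\mathcal X$ assigning each $x$ to the index $i$ minimizing $|x-t_i|$ (ties by smallest $i$), empty clusters discarded. $\mathcal C$ is a refinement of $\mathcal C'$ if $x\sim_{\mathcal C}y$ implies $x\sim_{\mathcal C'}y$, where $x\sim_{\mathcal C}y$ means $x,y$ lie in the same cluster of $\mathcal C$. Sequential $\ell$-means on input sequence $x_1,\ldots,x_N$: set $t_i=x_i$, $n_i=1$ for $i=1,\ldots,\ell$; for each subsequent point $x$: let $i$ be the index of the closest center (ties by smallest index), increment $n_i$, and replace $t_i$ by $t_i+(1/n_i)(x-t_i)$. Output the final $(t_1,\ldots,t_\ell)$. *)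

theory Defs
  imports "HOL-Analysis.Analysis"
begin

definition is_clustering :: "real set \<Rightarrow> real set set \<Rightarrow> bool" where
  "is_clustering X Cs \<longleftrightarrow>
     (\<forall>C\<in>Cs. C \<noteq> {}) \<and>
     (\<forall>C\<in>Cs. \<forall>D\<in>Cs. C \<noteq> D \<longrightarrow> C \<inter> D = {}) \<and>
     \<Union>Cs = X"

definition convex_nice :: "real set set \<Rightarrow> bool" where
  "convex_nice Cs \<longleftrightarrow>
     (\<forall>Ci\<in>Cs. \<forall>Cj\<in>Cs. Ci \<noteq> Cj \<longrightarrow>
        (\<forall>x\<in>convex hull Ci. \<forall>y\<in>convex hull Ci. \<forall>z\<in>convex hull Cj.
           dist y x < dist z x))"

definition same_cluster :: "real set set \<Rightarrow> real \<Rightarrow> real \<Rightarrow> bool" where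
  "same_cluster Cs x y \<longleftrightarrow> (\<exists>C\<in>Cs. x \<in> C \<and> y \<in> C)"

definition refines :: "real set set \<Rightarrow> real set set \<Rightarrow> bool" where
  "refines Cs Cs' \<longleftrightarrow> (\<forall>x y. same_cluster Cs x y \<longrightarrow> same_cluster Cs' x y)"

definition closest_idx :: "real list \<Rightarrow> real \<Rightarrow> nat" where
  "closest_idx T x = (LEAST i. i < length T \<and> (\<forall>j<length T. \<bar>x - T ! i\<bar> \<le> \<bar>x - T ! j\<bar>))"

definition induced_clustering :: "real set \<Rightarrow> real list \<Rightarrow> real set set" where
  "induced_clustering X T =
     {{x \<in> X. closest_idx T x = i} | i. i < length T} - {{}}"

text \<open>One step of sequential means: state = (centers, counts).\<close>
definition seq_step :: "real list \<times> nat list \<Rightarrow> real \<Rightarrow> real list \<times> nat list" where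
  "seq_step st x = (let T = fst st; n = snd st; i = closest_idx T x; ni = n ! i + 1 in
      (T[i := T ! i + (1 / real ni) * (x - T ! i)], n[i := ni]))"

definition seq_means :: "nat \<Rightarrow> real list \<Rightarrow> real list" where
  "seq_means l xs = fst (foldl seq_step (take l xs, replicate l 1) (drop l xs))"

end

theory Submission imports Defs begin

(* Feed sequential (m+1)-means the points of X in increasing order.
   The first m centers are then the m smallest points, and every later point is
   at least as large as the last center, so it is always assigned to the last
   center, which is updated by a convex combination and hence stays between its
   old value and the incoming point.  Consequently the first m centers never move
   and stay strictly below the last one.  A point x from the suffix drop m xs lies
   above all frozen centers, so it can only be closest to center m-1 or m.  Since
   every cluster has more than m points, each cluster meets this suffix; with at
   least three clusters two of the chosen points lie in different clusters but
   share a center, so the induced clustering does not refine the given one.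
   The argument only uses that the clusters partition X and are large enough. *)

lemma closest_idx_spec:
  assumes "T \<noteq> []"
  shows "closest_idx T x < length T \<and> (\<forall>j<length T. \<bar>x - T ! closest_idx T x\<bar> \<le> \<bar>x - T ! j\<bar>)"
proof -
  define d where "d = Min ((\<lambda>u. \<bar>x - u\<bar>) ` set T)"
  have "d \<in> (\<lambda>u. \<bar>x - u\<bar>) ` set T" unfolding d_def using assms by (intro Min_in) auto
  then obtain t where t: "t \<in> set T" "\<bar>x - t\<bar> = d" by blast
  have t_min: "\<forall>u\<in>set T. \<bar>x - t\<bar> \<le> \<bar>x - u\<bar>" using t(2) unfolding d_def by simp
  obtain i where "i < length T" "T ! i = t" using t(1) by (meson in_set_conv_nth)
  then have "\<exists>i. i < length T \<and> (\<forall>j<length T. \<bar>x - T ! i\<bar> \<le> \<bar>x - T ! j\<bar>)"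
    using t_min by (metis nth_mem)
  then show ?thesis unfolding closest_idx_def by (rule LeastI_ex)
qed

lemma closest_idx_not_left:
  assumes "i < length T" "j < length T" "T ! i < T ! j" "T ! j \<le> x"
  shows "closest_idx T x \<noteq> i"
proof
  assume "closest_idx T x = i"
  then have "\<bar>x - T ! i\<bar> \<le> \<bar>x - T ! j\<bar>"
    using closest_idx_spec[of T x] assms(2) by fastforce
  with assms(3,4) show False by simp
qed

lemma seq_step_last:
  assumes len: "length T = Suc m" and below: "\<forall>i<m. T ! i < T ! m" and y: "T ! m \<le> y"
  shows "\<exists>t. T ! m \<le> t \<and> t \<le> y \<and> fst (seq_step (T, n) y) = T[m := t]"
proof -
  have "closest_idx T y \<noteq> i" if "i < m" for i
    using closest_idx_not_left[of i T m y] that len below y by simp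
  moreover have "closest_idx T y < Suc m" using closest_idx_spec[of T y] len by force
  ultimately have ci: "closest_idx T y = m" using less_Suc_eq by blast
  define c where "c = 1 / real (n ! m + 1)"
  have c: "0 \<le> c" "c \<le> 1" unfolding c_def by (auto simp: field_simps)
  define t where "t = T ! m + c * (y - T ! m)"
  have "T ! m \<le> t" unfolding t_def using c y by simp
  moreover have "t \<le> y" unfolding t_def using c y by (smt (verit) mult_left_le_one_le)
  moreover have "fst (seq_step (T, n) y) = T[m := t]"
    unfolding seq_step_def Let_def t_def c_def by (simp add: ci)
  ultimately show ?thesis by blast
qed

lemma foldl_seq_step_frozen:
  assumes "length T = Suc m" "\<forall>i<m. T ! i < T ! m" "\<forall>y\<in>set ys. T ! m \<le> y" "sorted ys"
  shows "length (fst (foldl seq_step (T, n) ys)) = Suc m \<and>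
    (\<forall>i<m. fst (foldl seq_step (T, n) ys) ! i = T ! i \<and>
           fst (foldl seq_step (T, n) ys) ! i < fst (foldl seq_step (T, n) ys) ! m)"
  using assms
proof (induction ys arbitrary: T n)
  case Nil
  then show ?case by simp
next
  case (Cons y ys)
  obtain t where t: "T ! m \<le> t" "t \<le> y" and step: "fst (seq_step (T, n) y) = T[m := t]"
    using seq_step_last[of T m y n] Cons.prems by auto
  define st where "st = seq_step (T, n) y"
  have st: "st = (T[m := t], snd st)" using step unfolding st_def by (metis prod.collapse)
  have "length (fst (foldl seq_step st ys)) = Suc m \<and>
        (\<forall>i<m. fst (foldl seq_step st ys) ! i = T[m := t] ! i \<and>
               fst (foldl seq_step st ys) ! i < fst (foldl seq_step st ys) ! m)"
    using Cons.IH[of "T[m := t]" "snd st"] Cons.prems t st by fastforce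
  then show ?case using Cons.prems(1) unfolding st_def by fastforce
qed

(* Sequential (m+1)-means on a strictly increasing list: every point from
   position m on is closest to one of the two last centers, because the first
   m centers stay frozen at the first m input points. *)
lemma seq_means_sorted_closest:
  assumes sorted: "sorted_wrt (<) xs" and len: "Suc m \<le> length xs"
    and x: "x \<in> set (drop m xs)"
  shows "closest_idx (seq_means (Suc m) xs) x \<in> {m - 1, m}"
proof -
  define T where "T = seq_means (Suc m) xs"
  have lt: "\<And>i j. i < j \<Longrightarrow> j < length xs \<Longrightarrow> xs ! i < xs ! j"
    using sorted by (simp add: sorted_wrt_iff_nth_less)
  have ge: "xs ! i \<le> y" if "i \<le> j" "j < length xs" "y = xs ! j" for i j y
    using lt[of i j] that by (cases "i = j") auto
  have start: "\<forall>i<m. take (Suc m) xs ! i < take (Suc m) xs ! m"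
    using lt len by simp
  have rest: "\<forall>y\<in>set (drop (Suc m) xs). take (Suc m) xs ! m \<le> y"
    using ge len by (auto simp: in_set_conv_nth)
  have "sorted (drop (Suc m) xs)"
    using strict_sorted_imp_sorted[OF sorted] by (simp add: sorted_wrt_drop)
  then have T: "length T = Suc m \<and> (\<forall>i<m. T ! i = xs ! i)"
    using foldl_seq_step_frozen[OF _ start rest] len
    unfolding T_def seq_means_def by simp
  have not_frozen: "closest_idx T x \<noteq> c" if c: "c < m - 1" for c
  proof (rule closest_idx_not_left)
    show "c < length T" "m - 1 < length T" using T c by auto
    show "T ! c < T ! (m - 1)" using T lt[of c "m - 1"] c len by simp
    show "T ! (m - 1) \<le> x" using T c x ge[of "m - 1"] len by (auto simp: in_set_conv_nth)
  qed
  have "m - 1 \<le> closest_idx T x" using not_frozen not_less by blast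
  moreover have "closest_idx T x < Suc m" using closest_idx_spec[of T x] T by force
  ultimately have "closest_idx T x = m - 1 \<or> closest_idx T x = m" by linarith
  then show ?thesis unfolding T_def by blast
qed

lemma length_seq_means: "length (seq_means l xs) = min l (length xs)"
proof -
  have "length (fst (foldl seq_step st ys)) = length (fst st)" for st ys
    by (induction ys arbitrary: st) (simp_all add: seq_step_def Let_def)
  then show ?thesis unfolding seq_means_def by simp
qed

lemma same_closest_same_induced_cluster:
  assumes "T \<noteq> []" "r \<in> X" "s \<in> X" "closest_idx T r = closest_idx T s"
  shows "same_cluster (induced_clustering X T) r s"
proof -
  define G where "G = {x \<in> X. closest_idx T x = closest_idx T r}"
  have "closest_idx T r < length T" using closest_idx_spec[OF assms(1)] by blast
  then have "G \<in> {{x \<in> X. closest_idx T x = i} | i. i < length T}" unfolding G_def by blast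
  moreover have "r \<in> G" "s \<in> G" unfolding G_def using assms by auto
  ultimately have "G \<in> induced_clustering X T" unfolding induced_clustering_def by blast
  with \<open>r \<in> G\<close> \<open>s \<in> G\<close> show ?thesis unfolding same_cluster_def by blast
qed

lemma different_clusters_separated:
  assumes "is_clustering X Cs" "C \<in> Cs" "D \<in> Cs" "C \<noteq> D" "r \<in> C" "s \<in> D"
  shows "\<not> same_cluster Cs r s"
proof
  have disjoint: "\<And>E F. E \<in> Cs \<Longrightarrow> F \<in> Cs \<Longrightarrow> E \<noteq> F \<Longrightarrow> E \<inter> F = {}"
    using assms(1) unfolding is_clustering_def by blast
  assume "same_cluster Cs r s"
  then obtain E where "E \<in> Cs" "r \<in> E" "s \<in> E" unfolding same_cluster_def by blast
  then have "E = C" and "E = D" using disjoint assms(2,3,5,6) by blast+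
  with assms(4) show False by simp
qed

lemma shared_center_not_refines:
  assumes clustering: "is_clustering X Cs" and CD: "C \<in> Cs" "D \<in> Cs" "C \<noteq> D" "r \<in> C" "s \<in> D"
    and "T \<noteq> []" "closest_idx T r = closest_idx T s"
  shows "\<not> refines (induced_clustering X T) Cs"
proof -
  have "r \<in> X" "s \<in> X" using clustering CD unfolding is_clustering_def by blast+
  then have "same_cluster (induced_clustering X T) r s"
    using same_closest_same_induced_cluster assms(7,8) by blast
  moreover have "\<not> same_cluster Cs r s" using different_clusters_separated[OF clustering CD] .
  ultimately show ?thesis unfolding refines_def by blast
qed

lemma meets_suffix:
  assumes "set xs = X" "C \<subseteq> X" "m < card C"
  shows "C \<inter> set (drop m xs) \<noteq> {}"
proof
  assume disjoint: "C \<inter> set (drop m xs) = {}"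
  have "X = set (take m xs) \<union> set (drop m xs)"
    using assms(1) by (metis append_take_drop_id set_append)
  then have "C \<subseteq> set (take m xs)" using assms(2) disjoint by blast
  then have "card C \<le> card (set (take m xs))" by (simp add: card_mono)
  also have "\<dots> \<le> m" using card_length[of "take m xs"] by simp
  finally show False using assms(3) by simp
qed

lemma pigeonhole_two_values:
  assumes "3 \<le> card Cs" "\<forall>C\<in>Cs. \<exists>r\<in>C. f r \<in> {a, b}"
  shows "\<exists>C\<in>Cs. \<exists>D\<in>Cs. C \<noteq> D \<and> (\<exists>r\<in>C. \<exists>s\<in>D. f r = f s)"
proof -
  obtain A where "A \<subseteq> Cs" "card A = 3" using assms(1) by (meson obtain_subset_with_card_n)
  then obtain C1 C2 C3 where C: "C1 \<in> Cs" "C2 \<in> Cs" "C3 \<in> Cs"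
    and distinct: "C1 \<noteq> C2" "C1 \<noteq> C3" "C2 \<noteq> C3"
    by (metis card_3_iff insert_subset)
  obtain r1 r2 r3 where r: "r1 \<in> C1" "r2 \<in> C2" "r3 \<in> C3"
    and f: "f r1 \<in> {a, b}" "f r2 \<in> {a, b}" "f r3 \<in> {a, b}"
    using assms(2) C by meson
  from f have "f r1 = f r2 \<or> f r1 = f r3 \<or> f r2 = f r3" by auto
  then show ?thesis using C distinct r by blast
qed

lemma sorted_run_cluster_meets_last_centers:
  assumes "finite X" "is_clustering X Cs" "C \<in> Cs" "Suc m \<le> card C"
  shows "\<exists>r\<in>C. closest_idx (seq_means (Suc m) (sorted_list_of_set X)) r \<in> {m - 1, m}"
proof -
  define xs where "xs = sorted_list_of_set X"
  have xs: "distinct xs" "set xs = X" "sorted_wrt (<) xs" using assms(1) unfolding xs_def by auto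
  have sub: "C \<subseteq> X" using assms(2,3) unfolding is_clustering_def by blast
  have "Suc m \<le> card X" using card_mono[OF assms(1) sub] assms(4) by simp
  then have len: "Suc m \<le> length xs" using distinct_card[OF xs(1)] xs(2) by simp
  have "C \<inter> set (drop m xs) \<noteq> {}" using meets_suffix[OF xs(2) sub] assms(4) by simp
  then obtain r where "r \<in> C" "r \<in> set (drop m xs)" by blast
  then show ?thesis using seq_means_sorted_closest[OF xs(3) len] unfolding xs_def by blast
qed

theorem mainTheorem11:
  fixes X :: "real set" and Cs :: "real set set" and k l :: nat
  assumes "k \<ge> 3"
    and "finite X"
    and "is_clustering X Cs"
    and "card Cs = k"
    and "convex_nice Cs"
    and "1 \<le> l"
    and "\<forall>C\<in>Cs. l \<le> card C"
  shows "\<exists>xs. distinct xs \<and> set xs = X \<and>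
           \<not> refines (induced_clustering X (seq_means l xs)) Cs"
proof -
  obtain m where l: "l = Suc m" using assms(6) by (cases l) auto
  define xs where "xs = sorted_list_of_set X"
  define T where "T = seq_means l xs"
  have "\<forall>C\<in>Cs. \<exists>r\<in>C. closest_idx T r \<in> {m - 1, m}"
    using sorted_run_cluster_meets_last_centers[OF assms(2,3)] assms(7)
    unfolding T_def xs_def l by blast
  then obtain C D r s where CD: "C \<in> Cs" "D \<in> Cs" "C \<noteq> D" "r \<in> C" "s \<in> D"
    and same: "closest_idx T r = closest_idx T s"
    using pigeonhole_two_values[of Cs "closest_idx T" "m - 1" m] assms(1,4) by auto
  have "set xs = X" "distinct xs" using assms(2) unfolding xs_def by auto
  moreover have "r \<in> X" using assms(3) CD unfolding is_clustering_def by blast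
  ultimately have "xs \<noteq> []" by auto
  then have "0 < length T" unfolding T_def l length_seq_means by simp
  then have "T \<noteq> []" by auto
  then have "\<not> refines (induced_clustering X T) Cs"
    using shared_center_not_refines[OF assms(3) CD _ same] by blast
  then show ?thesis using \<open>set xs = X\<close> \<open>distinct xs\<close> unfolding T_def by blast
qed

end
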